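(* Let $\mathcal D$ be a $k$-oriented Spherical Diagram and $H$ an attractor hull of $\mathcal D$. If an arc of $\mathcal D$ intersects the interior of $H$, then it intersects the boundary of $H$ in at most one point.
   Context: A geodesic arc on the unit sphere in $\mathbb R^3$ is the unique shortest curve joining two non-antipodal points. An arc $a$ blocks an arc $b$ (equivalently, $b$ hits $a$) if an endpoint of $b$ lies in the relative interior of $a$. A Spherical Diagram (SD) is a finite non-empty collection $\mathcal D$ of pairwise interior-disjoint geodesic arcs on the unit sphere such that each arc of $\mathcal D$ is blocked by arcs of $\mathcal D$ at each of its endpoints. An SD $\mathcal D$ is $k$-oriented if there exist a set $P$ of $k$ points on the unit sphere (poles), no two antipodal, and a function $f\colon\mathcal D\to P$ such that each arc $a\in\mathcal D$ lies on a great circle through $f(a)$ but contains neither $f(a)$ nor its antipode $-f(a)$ (the anti-pole of $f(a)$). An attractor of a $k$-oriented SD is a set of $k$ points, no two antipodal, chosen among its poles and anti-poles. An attractor hull is the spherical convex hull of an attractor (the whole sphere if the attractor is not contained in any open hemisphere). "Intersect" means "have non-empty intersection". *)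

theory Defs
  imports "HOL-Analysis.Analysis"
begin

type_synonym point = "real^3"

abbreviation S2 :: "point set" where "S2 \<equiv> sphere 0 1"

definition nrm :: "point \<Rightarrow> point" where "nrm x = x /\<^sub>R norm x"

text \<open>An arc is represented by its pair of endpoints (p,q): distinct,
  non-antipodal points of the unit sphere.\<close>
definition is_arc :: "point \<times> point \<Rightarrow> bool" where
  "is_arc a \<longleftrightarrow> fst a \<in> S2 \<and> snd a \<in> S2 \<and> fst a \<noteq> snd a \<and> fst a \<noteq> - snd a"

definition arc_set :: "point \<times> point \<Rightarrow> point set" where
  "arc_set a = nrm ` closed_segment (fst a) (snd a)"

definition arc_relint :: "point \<times> point \<Rightarrow> point set" where
  "arc_relint a = nrm ` open_segment (fst a) (snd a)"

definition blocks :: "point \<times> point \<Rightarrow> point \<times> point \<Rightarrow> bool" where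
  "blocks a b \<longleftrightarrow> fst b \<in> arc_relint a \<or> snd b \<in> arc_relint a"

definition spherical_diagram :: "(point \<times> point) set \<Rightarrow> bool" where
  "spherical_diagram D \<longleftrightarrow> finite D \<and> D \<noteq> {} \<and> (\<forall>a\<in>D. is_arc a)
     \<and> (\<forall>a\<in>D. \<forall>b\<in>D. a \<noteq> b \<longrightarrow> arc_relint a \<inter> arc_relint b = {})
     \<and> (\<forall>a\<in>D. (\<exists>b\<in>D. fst a \<in> arc_relint b) \<and> (\<exists>b\<in>D. snd a \<in> arc_relint b))"

definition no_antipodal :: "point set \<Rightarrow> bool" where
  "no_antipodal P \<longleftrightarrow> (\<forall>x\<in>P. \<forall>y\<in>P. y \<noteq> - x)"

definition oriented_by :: "point \<times> point \<Rightarrow> point \<Rightarrow> bool" where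
  "oriented_by a c \<longleftrightarrow> (\<exists>n. n \<noteq> 0 \<and> n \<bullet> c = 0 \<and> (\<forall>x\<in>arc_set a. n \<bullet> x = 0))
     \<and> c \<notin> arc_set a \<and> - c \<notin> arc_set a"

definition orientation :: "nat \<Rightarrow> (point \<times> point) set \<Rightarrow> point set \<Rightarrow> (point \<times> point \<Rightarrow> point) \<Rightarrow> bool" where
  "orientation k D P f \<longleftrightarrow> P \<subseteq> S2 \<and> finite P \<and> card P = k \<and> no_antipodal P
     \<and> (\<forall>a\<in>D. f a \<in> P \<and> oriented_by a (f a))"

definition k_oriented_SD :: "nat \<Rightarrow> (point \<times> point) set \<Rightarrow> bool" where
  "k_oriented_SD k D \<longleftrightarrow> spherical_diagram D \<and> (\<exists>P f. orientation k D P f)"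

definition attractor :: "nat \<Rightarrow> point set \<Rightarrow> point set \<Rightarrow> bool" where
  "attractor k P A \<longleftrightarrow> A \<subseteq> P \<union> uminus ` P \<and> finite A \<and> card A = k \<and> no_antipodal A"

definition spherical_hull :: "point set \<Rightarrow> point set" where
  "spherical_hull A = (if \<exists>n. \<forall>x\<in>A. n \<bullet> x > 0 then nrm ` (convex hull A) else S2)"

end

theory Submission
  imports Defs
begin

text \<open>The arc \<open>a\<close> lies on a great circle \<open>G\<close> through its pole \<open>f a\<close>, which is not on \<open>a\<close>.
  Counting shows that the attractor contains \<open>f a\<close> or \<open>- f a\<close>: a point \<open>v\<close> of the hull \<open>H\<close>
  on \<open>G\<close> but off \<open>a\<close>. If \<open>H\<close> is the whole sphere its boundary is empty. Otherwise \<open>H\<close> lies in an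
  open hemisphere, so \<open>v\<close> and \<open>H \<inter> a\<close> lie on an open half circle of \<open>G\<close>, which central
  projection turns into a line. If \<open>a\<close> met the boundary of \<open>H\<close> in \<open>x \<noteq> y\<close> and its interior
  in \<open>z\<close>, then ordering \<open>v, x, y, z\<close> on that line, either \<open>v\<close> lies between two points of \<open>a\<close>,
  contradicting the convexity of \<open>a\<close>, or \<open>x\<close> or \<open>y\<close> lies strictly between \<open>z\<close> and a point
  of \<open>H\<close>, which forces it into the interior of \<open>H\<close>.\<close>

lemma nrm_in_sphere: "z \<noteq> 0 \<Longrightarrow> nrm z \<in> S2"
  by (simp add: nrm_def)

lemma nrm_sphere: "x \<in> S2 \<Longrightarrow> nrm x = x"
  by (simp add: nrm_def)

lemma nrm_scaleR_pos: "l > 0 \<Longrightarrow> nrm (l *\<^sub>R x) = nrm x"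
  by (simp add: nrm_def)

lemma scaleR_norm_nrm: "norm x *\<^sub>R nrm x = x"
  by (cases "x = 0") (simp_all add: nrm_def)

lemma inner_nrm: "m \<bullet> nrm z = (m \<bullet> z) / norm z"
  by (simp add: nrm_def divide_inverse mult.commute)

lemma radial_image_subset_sphere: "0 \<notin> C \<Longrightarrow> nrm ` C \<subseteq> S2"
  by (metis image_subset_iff nrm_in_sphere)

lemma compact_radial_image:
  assumes "compact K" "0 \<notin> K"
  shows "compact (nrm ` K)"
proof -
  have "continuous_on K (\<lambda>x. x /\<^sub>R norm x)"
    using assms(2) by (intro continuous_intros) auto
  then show ?thesis
    unfolding nrm_def using assms(1) by (rule compact_continuous_image)
qed

lemma zero_notin_closed_segment_sphere:
  assumes "p \<in> S2" "q \<in> S2" "p \<noteq> - q"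
  shows "0 \<notin> closed_segment p q"
proof
  assume "0 \<in> closed_segment p q"
  then obtain t where t: "0 \<le> t" "t \<le> 1" "(1 - t) *\<^sub>R p = - (t *\<^sub>R q)"
    by (auto simp: in_segment eq_neg_iff_add_eq_0)
  have "norm ((1 - t) *\<^sub>R p) = norm (- (t *\<^sub>R q))"
    by (rule arg_cong[OF t(3)])
  then have "1 - t = t"
    using assms t(1,2) by simp
  then have "t *\<^sub>R p = t *\<^sub>R (- q)" "t \<noteq> 0"
    using t(3) by (metis scaleR_minus_right, linarith)
  then show False
    using assms(3) scaleR_cancel_left[of t p "- q"] by blast
qed

definition positive_combination :: "'a::real_vector \<Rightarrow> 'a \<Rightarrow> 'a \<Rightarrow> bool" where
  "positive_combination x u w \<longleftrightarrow> (\<exists>\<alpha>>0. \<exists>\<beta>>0. x = \<alpha> *\<^sub>R u + \<beta> *\<^sub>R w)"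

lemma positive_combinationI:
  "\<alpha> > 0 \<Longrightarrow> \<beta> > 0 \<Longrightarrow> x = \<alpha> *\<^sub>R u + \<beta> *\<^sub>R w \<Longrightarrow> positive_combination x u w"
  unfolding positive_combination_def by blast

lemma positive_combination_in_radial_image:
  assumes "convex C" "0 \<notin> C" "u \<in> nrm ` C" "w \<in> nrm ` C" "x \<in> S2"
    and "positive_combination x u w"
  shows "x \<in> nrm ` C"
proof -
  obtain cu cw where c: "cu \<in> C" "cw \<in> C" "u = nrm cu" "w = nrm cw"
    using assms(3,4) by blast
  obtain \<alpha> \<beta> where ab: "\<alpha> > 0" "\<beta> > 0" "x = \<alpha> *\<^sub>R u + \<beta> *\<^sub>R w"
    using assms(6) unfolding positive_combination_def by blast
  define a b where "a = \<alpha> / norm cu" and "b = \<beta> / norm cw"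
  have "cu \<noteq> 0" "cw \<noteq> 0"
    using c assms(2) by auto
  then have pos: "a > 0" "b > 0"
    using ab by (simp_all add: a_def b_def)
  define c where "c = (a / (a + b)) *\<^sub>R cu + (b / (a + b)) *\<^sub>R cw"
  have "c \<in> C"
    unfolding c_def using convexD[OF assms(1) c(1,2)] pos by (simp add: add_divide_distrib[symmetric])
  have "x = a *\<^sub>R cu + b *\<^sub>R cw"
    using ab(3) c(3,4) by (simp add: a_def b_def nrm_def divide_inverse mult.commute)
  also have "\<dots> = (a + b) *\<^sub>R c"
    using pos by (simp add: c_def scaleR_add_right)
  finally have "nrm x = nrm c"
    using pos by (simp add: nrm_scaleR_pos)
  then show ?thesis
    using \<open>c \<in> C\<close> assms(5) by (simp add: nrm_sphere)
qed

lemma positive_combination_in_interior: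
  assumes "convex C" "0 \<notin> C" "u \<in> nrm ` C" "w \<in> top_of_set S2 interior_of nrm ` C" "x \<in> S2"
    and "positive_combination x u w"
  shows "x \<in> top_of_set S2 interior_of nrm ` C"
proof -
  obtain \<alpha> \<beta> where ab: "\<alpha> > 0" "\<beta> > 0" "x = \<alpha> *\<^sub>R u + \<beta> *\<^sub>R w"
    using assms(6) unfolding positive_combination_def by blast
  obtain T where T: "openin (top_of_set S2) T" "w \<in> T" "T \<subseteq> nrm ` C"
    using assms(4) unfolding interior_of_def by blast
  then obtain e where e: "e > 0" "\<forall>y\<in>S2. dist y w < e \<longrightarrow> y \<in> nrm ` C"
    unfolding openin_euclidean_subtopology_iff by blast
  have w: "w \<in> S2"
    using T radial_image_subset_sphere[OF assms(2)] by blast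
  \<comment> \<open>every \<open>y\<close> is a positive combination of \<open>u\<close> and \<open>\<phi> y\<close>, and \<open>\<phi>\<close> is continuous with \<open>\<phi> x = w\<close>\<close>
  define \<phi> where "\<phi> y = nrm (y - \<alpha> *\<^sub>R u)" for y
  have "\<phi> x = w"
    using ab w by (simp add: \<phi>_def nrm_scaleR_pos nrm_sphere)
  have "continuous (at x) \<phi>"
    using ab w unfolding \<phi>_def nrm_def by (intro continuous_intros) auto
  moreover have "min e 1 > 0"
    using e(1) by simp
  ultimately obtain d where d: "d > 0" "\<forall>y. dist y x < d \<longrightarrow> dist (\<phi> y) (\<phi> x) < min e 1"
    unfolding continuous_at_eps_delta by blast
  have "S2 \<inter> ball x d \<subseteq> nrm ` C"
  proof
    fix y assume y: "y \<in> S2 \<inter> ball x d"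
    then have close: "dist (\<phi> y) w < min e 1"
      using d(2) \<open>\<phi> x = w\<close> by (simp add: dist_commute)
    \<comment> \<open>\<open>\<phi> y\<close> is not the junk value \<open>nrm 0 = 0\<close>, which has distance 1 from \<open>w\<close>\<close>
    then have "y - \<alpha> *\<^sub>R u \<noteq> 0"
      using w by (auto simp: \<phi>_def nrm_def)
    then have "\<phi> y \<in> nrm ` C"
      using e(2) close nrm_in_sphere by (simp add: \<phi>_def)
    moreover have "positive_combination y u (\<phi> y)"
    proof (rule positive_combinationI[OF ab(1)])
      show "norm (y - \<alpha> *\<^sub>R u) > 0"
        using \<open>y - \<alpha> *\<^sub>R u \<noteq> 0\<close> by simp
      show "y = \<alpha> *\<^sub>R u + norm (y - \<alpha> *\<^sub>R u) *\<^sub>R \<phi> y"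
        by (simp add: \<phi>_def scaleR_norm_nrm)
    qed
    ultimately show "y \<in> nrm ` C"
      using positive_combination_in_radial_image[OF assms(1-3)] y by blast
  qed
  moreover have "openin (top_of_set S2) (S2 \<inter> ball x d)"
    by blast
  ultimately have "S2 \<inter> ball x d \<subseteq> top_of_set S2 interior_of nrm ` C"
    by (rule interior_of_maximal)
  then show ?thesis
    using assms(5) d(1) by (meson IntI centre_in_ball subsetD)
qed

lemma cross3_nonzero:
  assumes "n \<noteq> 0" "n \<bullet> v = 0" "m \<bullet> v \<noteq> 0"
  shows "cross3 n m \<noteq> 0"
proof
  assume "cross3 n m = 0"
  then have "n = 0 \<or> m = 0 \<or> (\<exists>c. m = c *\<^sub>R n)"
    by (simp add: cross_eq_0 collinear_lemma)
  then show False
    using assms by auto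
qed

lemma orthogonal_both_imp_parallel_cross3:
  assumes "cross3 n m \<noteq> 0" "n \<bullet> d = 0" "m \<bullet> d = 0"
  shows "d = ((d \<bullet> cross3 n m) / (cross3 n m \<bullet> cross3 n m)) *\<^sub>R cross3 n m"
proof (rule cross_dot_cancel[OF _ _ assms(1)])
  show "cross3 n m \<bullet> d = cross3 n m \<bullet> ((d \<bullet> cross3 n m) / (cross3 n m \<bullet> cross3 n m)) *\<^sub>R cross3 n m"
    using assms(1) by (simp add: inner_commute)
  have "cross3 d (cross3 n m) = 0"
    using Lagrange[of d n m] assms(2,3) by (simp add: inner_commute)
  then show "cross3 (cross3 n m) d
      = cross3 (cross3 n m) (((d \<bullet> cross3 n m) / (cross3 n m \<bullet> cross3 n m)) *\<^sub>R cross3 n m)"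
    by (simp add: cross_mult_right cross_skew[of "cross3 n m" d])
qed

text \<open>Central projection of the great circle \<open>n \<bullet> p = 0\<close> onto the line
  \<open>{g. n \<bullet> g = 0 \<and> m \<bullet> g = 1}\<close>, measured along \<open>cross3 n m\<close>. On the open half circle
  \<open>m \<bullet> p > 0\<close> it is an injective coordinate in which positive combinations become
  betweenness.\<close>

definition gnomonic_coord :: "point \<Rightarrow> point \<Rightarrow> point \<Rightarrow> real" where
  "gnomonic_coord n m p = (cross3 n m \<bullet> p) / (m \<bullet> p)"

lemma gnomonic_diff:
  assumes "cross3 n m \<noteq> 0" "n \<bullet> p = 0" "m \<bullet> p \<noteq> 0" "n \<bullet> q = 0" "m \<bullet> q \<noteq> 0"
  shows "p /\<^sub>R (m \<bullet> p) - q /\<^sub>R (m \<bullet> q)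
    = ((gnomonic_coord n m p - gnomonic_coord n m q) / (cross3 n m \<bullet> cross3 n m)) *\<^sub>R cross3 n m"
proof -
  let ?d = "p /\<^sub>R (m \<bullet> p) - q /\<^sub>R (m \<bullet> q)"
  have nd: "n \<bullet> ?d = 0" and md: "m \<bullet> ?d = 0"
    using assms by (simp_all add: inner_diff_right)
  have coord: "?d \<bullet> cross3 n m = gnomonic_coord n m p - gnomonic_coord n m q"
    by (simp add: gnomonic_coord_def inner_diff_left inner_diff_right
        inner_commute[of _ "cross3 n m"] divide_inverse_commute)
  show ?thesis
    using orthogonal_both_imp_parallel_cross3[OF assms(1) nd md] unfolding coord .
qed

lemma positive_combination_if_gnomonic_between:
  assumes "cross3 n m \<noteq> 0"
    and "n \<bullet> p = 0" "m \<bullet> p > 0" "n \<bullet> q = 0" "m \<bullet> q > 0" "n \<bullet> r = 0" "m \<bullet> r > 0"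
    and "gnomonic_coord n m q \<in> open_segment (gnomonic_coord n m p) (gnomonic_coord n m r)"
  shows "positive_combination q p r"
proof -
  let ?s = "gnomonic_coord n m" and ?g = "\<lambda>x. x /\<^sub>R (m \<bullet> x)"
  obtain t where t: "0 < t" "t < 1" "?s q - ?s p = t * (?s r - ?s p)"
    using assms(8) by (auto simp: in_segment algebra_simps)
  have "?g q - ?g p = t *\<^sub>R (?g r - ?g p)"
    using t(3) assms(2-7) by (simp add: gnomonic_diff[OF assms(1)])
  then have "?g q = (1 - t) *\<^sub>R ?g p + t *\<^sub>R ?g r"
    by (simp add: algebra_simps)
  then have "(m \<bullet> q) *\<^sub>R ?g q = (m \<bullet> q) *\<^sub>R ((1 - t) *\<^sub>R ?g p + t *\<^sub>R ?g r)"
    by simp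
  then have "q = ((m \<bullet> q) * (1 - t) / (m \<bullet> p)) *\<^sub>R p + ((m \<bullet> q) * t / (m \<bullet> r)) *\<^sub>R r"
    using assms(5) by (simp add: scaleR_add_right divide_inverse mult.assoc)
  then show ?thesis
    by (rule positive_combinationI[rotated 2]) (use t(1,2) assms(3,5,7) in simp_all)
qed

lemma gnomonic_coord_inj:
  assumes "cross3 n m \<noteq> 0"
    and "p \<in> S2" "n \<bullet> p = 0" "m \<bullet> p > 0" "q \<in> S2" "n \<bullet> q = 0" "m \<bullet> q > 0"
    and "gnomonic_coord n m p = gnomonic_coord n m q"
  shows "p = q"
proof -
  have "m \<bullet> p \<noteq> 0" "m \<bullet> q \<noteq> 0"
    using assms(4,7) by simp_all
  then have "p /\<^sub>R (m \<bullet> p) - q /\<^sub>R (m \<bullet> q) = 0"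
    using gnomonic_diff[OF assms(1,3) _ assms(6)] assms(8) by simp
  then have "nrm (p /\<^sub>R (m \<bullet> p)) = nrm (q /\<^sub>R (m \<bullet> q))"
    by simp
  then show ?thesis
    using assms(2,4,5,7) by (simp add: nrm_scaleR_pos nrm_sphere)
qed

lemma four_points_betweenness:
  fixes s :: "'a \<Rightarrow> real"
  assumes "distinct [s v, s x, s y, s z]"
  obtains p q where "p \<in> {x, y, z}" "q \<in> {x, y, z}" "s v \<in> open_segment (s p) (s q)"
    | u where "u \<in> {v, y}" "s x \<in> open_segment (s u) (s z)"
    | u where "u \<in> {v, x}" "s y \<in> open_segment (s u) (s z)"
proof -
  have "s v \<in> open_segment (s x) (s y) \<or> s v \<in> open_segment (s x) (s z) \<or>
      s v \<in> open_segment (s y) (s z) \<or> s x \<in> open_segment (s v) (s z) \<or>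
      s x \<in> open_segment (s y) (s z) \<or> s y \<in> open_segment (s v) (s z) \<or>
      s y \<in> open_segment (s x) (s z)"
    using assms by (auto simp: open_segment_eq_real_ivl)
  then show thesis
    using that by blast
qed

lemma attractor_contains_pole_or_antipole:
  assumes "attractor k P A" "finite P" "card P = k" "c \<in> P"
  shows "\<exists>v\<in>A. v = c \<or> v = - c"
proof -
  define g where "g x = (if x \<in> P then x else - x)" for x :: point
  have A: "A \<subseteq> P \<union> uminus ` P" "finite A" "card A = card P" "no_antipodal A"
    using assms(1,3) unfolding attractor_def by auto
  then have "g ` A \<subseteq> P"
    by (auto simp: g_def)
  moreover have "inj_on g A"
    using A(4) by (auto simp: inj_on_def g_def no_antipodal_def split: if_splits)
  then have "card (g ` A) = card P"
    using A(3) by (simp add: card_image)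
  ultimately have "g ` A = P"
    using assms(2) by (simp add: card_subset_eq)
  then obtain v where "v \<in> A" "g v = c"
    using assms(4) by blast
  then show ?thesis
    by (auto simp: g_def split: if_splits)
qed

lemma attractor_point_on_arc_circle:
  assumes "orientation k D P f" "attractor k P A" "a \<in> D"
  obtains n v where "n \<noteq> 0" "\<forall>x\<in>arc_set a. n \<bullet> x = 0" "v \<in> A" "v \<in> S2" "n \<bullet> v = 0"
    "v \<notin> arc_set a"
proof -
  obtain n where n: "n \<noteq> 0" "n \<bullet> f a = 0" "\<forall>x\<in>arc_set a. n \<bullet> x = 0"
    and pole: "f a \<notin> arc_set a" "- f a \<notin> arc_set a"
    using assms(1,3) by (auto simp: orientation_def oriented_by_def)
  have P: "finite P" "card P = k" "f a \<in> P" "f a \<in> S2"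
    using assms(1,3) by (auto simp: orientation_def)
  obtain v where v: "v \<in> A" "v = f a \<or> v = - f a"
    using attractor_contains_pole_or_antipole[OF assms(2) P(1-3)] by blast
  show thesis
    using that[OF n(1,3) v(1)] v(2) n(2) pole P(4) by auto
qed

lemma frontier_of_compact_radial_image:
  assumes "compact K" "0 \<notin> K"
  shows "top_of_set S2 frontier_of nrm ` K = nrm ` K - top_of_set S2 interior_of nrm ` K"
proof -
  have "closedin (top_of_set S2) (nrm ` K)"
    using compact_radial_image[OF assms] radial_image_subset_sphere[OF assms(2)]
    by (auto intro: closed_subset compact_imp_closed)
  then show ?thesis
    by (simp add: frontier_of_def closure_of_closedin)
qed

lemma radial_arc_meets_boundary_at_most_once:
  fixes C K :: "point set"
  assumes C: "convex C" "0 \<notin> C" and K: "convex K" "K \<subseteq> {p. m \<bullet> p > 0}"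
    and n: "n \<noteq> 0" "\<forall>p\<in>nrm ` C. n \<bullet> p = 0"
    and v: "v \<in> nrm ` K" "n \<bullet> v = 0" "v \<notin> nrm ` C"
    and z: "z \<in> nrm ` C" "z \<in> top_of_set S2 interior_of nrm ` K"
    and x: "x \<in> nrm ` C" "x \<in> nrm ` K" "x \<notin> top_of_set S2 interior_of nrm ` K"
    and y: "y \<in> nrm ` C" "y \<in> nrm ` K" "y \<notin> top_of_set S2 interior_of nrm ` K"
  shows "x = y"
proof (rule ccontr)
  assume "x \<noteq> y"
  let ?s = "gnomonic_coord n m"
  have K0: "0 \<notin> K"
    using K(2) by auto
  have "z \<in> nrm ` K"
    using interior_of_subset z(2) by (rule subsetD)
  have in_K: "p \<in> nrm ` K" if "p \<in> {v, x, y, z}" for p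
    using that v(1) x(2) y(2) \<open>z \<in> nrm ` K\<close> by auto
  have circle: "n \<bullet> p = 0" if "p \<in> {v, x, y, z}" for p
    using that v(2) n(2) x(1) y(1) z(1) by auto
  have sphere: "p \<in> S2" if "p \<in> {v, x, y, z}" for p
    using in_K[OF that] radial_image_subset_sphere[OF K0] by blast
  have half: "m \<bullet> p > 0" if "p \<in> {v, x, y, z}" for p
  proof -
    from in_K[OF that] obtain k where "k \<in> K" "p = nrm k"
      by blast
    moreover have "m \<bullet> k > 0" "k \<noteq> 0"
      using \<open>k \<in> K\<close> K(2) K0 by auto
    ultimately show ?thesis
      by (simp add: inner_nrm)
  qed
  have E: "cross3 n m \<noteq> 0"
    using cross3_nonzero[OF n(1) v(2)] half[of v] by simp
  have between: "positive_combination q p r"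
    if "p \<in> {v, x, y, z}" "q \<in> {v, x, y, z}" "r \<in> {v, x, y, z}" "?s q \<in> open_segment (?s p) (?s r)"
    for p q r
    using positive_combination_if_gnomonic_between[OF E circle[OF that(1)] half[OF that(1)]
        circle[OF that(2)] half[OF that(2)] circle[OF that(3)] half[OF that(3)] that(4)] .
  have "inj_on ?s {v, x, y, z}"
  proof (rule inj_onI)
    fix p q assume "p \<in> {v, x, y, z}" "q \<in> {v, x, y, z}" "?s p = ?s q"
    then show "p = q"
      using gnomonic_coord_inj[OF E sphere circle half sphere circle half] by blast
  qed
  moreover have "distinct [v, x, y, z]"
    using v(3) x y z \<open>x \<noteq> y\<close> by auto
  ultimately have "distinct [?s v, ?s x, ?s y, ?s z]"
    using distinct_map[of ?s "[v, x, y, z]"] by simp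
  then show False
  proof (cases rule: four_points_betweenness[of ?s v x y z])
    case (1 p q)
    then have "positive_combination v p q"
      by (intro between) auto
    moreover have "p \<in> nrm ` C" "q \<in> nrm ` C"
      using 1(1,2) x(1) y(1) z(1) by blast+
    ultimately have "v \<in> nrm ` C"
      using positive_combination_in_radial_image[OF C] sphere[of v] by blast
    with v(3) show False ..
  next
    case (2 u)
    then have "positive_combination x u z"
      by (intro between) auto
    moreover have "u \<in> nrm ` K"
      using 2(1) in_K by blast
    ultimately have "x \<in> top_of_set S2 interior_of nrm ` K"
      using positive_combination_in_interior[OF K(1) K0 _ z(2)] sphere[of x] by blast
    with x(3) show False ..
  next
    case (3 u)
    then have "positive_combination y u z"
      by (intro between) auto
    moreover have "u \<in> nrm ` K"
      using 3(1) in_K by blast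
    ultimately have "y \<in> top_of_set S2 interior_of nrm ` K"
      using positive_combination_in_interior[OF K(1) K0 _ z(2)] sphere[of y] by blast
    with y(3) show False ..
  qed
qed

theorem mainTheorem14:
  fixes k :: nat and D :: "(point \<times> point) set" and P :: "point set"
    and f :: "point \<times> point \<Rightarrow> point" and A :: "point set" and a :: "point \<times> point"
  assumes "spherical_diagram D"
    and "orientation k D P f"
    and "attractor k P A"
    and "a \<in> D"
    and "arc_set a \<inter> ((top_of_set S2) interior_of (spherical_hull A)) \<noteq> {}"
  shows "\<forall>x\<in>arc_set a \<inter> ((top_of_set S2) frontier_of (spherical_hull A)).
         \<forall>y\<in>arc_set a \<inter> ((top_of_set S2) frontier_of (spherical_hull A)). x = y"
proof (cases "\<exists>m. \<forall>x\<in>A. m \<bullet> x > 0")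
  case False
  then have "spherical_hull A = S2"
    unfolding spherical_hull_def by (rule if_not_P)
  then show ?thesis
    using frontier_of_topspace[of "top_of_set S2"] by simp
next
  case True
  then obtain m where "\<forall>x\<in>A. m \<bullet> x > 0" ..
  then have K: "convex hull A \<subseteq> {p. m \<bullet> p > 0}"
    by (intro hull_minimal) (auto simp: convex_halfspace_gt)
  have hull: "spherical_hull A = nrm ` (convex hull A)"
    using True by (simp add: spherical_hull_def)
  have "compact (convex hull A)" "0 \<notin> convex hull A"
    using assms(3) K by (auto simp: attractor_def intro: compact_convex_hull finite_imp_compact)
  obtain n v where n: "n \<noteq> 0" "\<forall>x\<in>arc_set a. n \<bullet> x = 0"
    and v: "v \<in> A" "v \<in> S2" "n \<bullet> v = 0" "v \<notin> arc_set a"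
    using attractor_point_on_arc_circle[OF assms(2-4)] .
  then have "v \<in> nrm ` (convex hull A)"
    by (metis hull_inc image_eqI nrm_sphere)
  have "0 \<notin> closed_segment (fst a) (snd a)"
    using assms(1,4) by (intro zero_notin_closed_segment_sphere) (auto simp: spherical_diagram_def is_arc_def)
  then show ?thesis
    using radial_arc_meets_boundary_at_most_once[OF convex_closed_segment _ convex_convex_hull K n(1)
        n(2)[unfolded arc_set_def] \<open>v \<in> nrm ` (convex hull A)\<close> v(3) v(4)[unfolded arc_set_def]]
      assms(5)
    unfolding hull frontier_of_compact_radial_image[OF \<open>compact (convex hull A)\<close> \<open>0 \<notin> convex hull A\<close>]
      arc_set_def by blast
qed

end
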